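(* In the setting of the context, for all $X,Y,Z,W\in\Gamma(\mathcal F)$, \[ g_{\mathcal F}\big(R^{\mathcal F,0}(X,Y)Z+R^{\mathcal F,0}(Z,X)Y+R^{\mathcal F,0}(Y,Z)X,\,W\big) =\tfrac12\Big((L_{\widetilde\Omega_{\mathcal F}(Y,Z)}g_{\mathcal F})(X,W)+(L_{\widetilde\Omega_{\mathcal F}(X,Y)}g_{\mathcal F})(Z,W)+(L_{\widetilde\Omega_{\mathcal F}(Z,X)}g_{\mathcal F})(Y,W)\Big). \]
   Context: $M$ is a smooth manifold with a distribution $\mathcal F$ with fiber metric $g_{\mathcal F}$ and a complementary distribution $\mathcal T$ ($TM=\mathcal F\oplus\mathcal T$); $X^{\mathcal F},X^{\mathcal T}$ denote components. $\nabla^{\mathcal F,0}$ is the connection on $\mathcal F$ defined, for $X,Y,Z\in\Gamma(\mathcal F)$ and $U\in\Gamma(\mathcal T)$, by $2g_{\mathcal F}(\nabla^{\mathcal F,0}_XY,Z)=Xg_{\mathcal F}(Y,Z)+Yg_{\mathcal F}(Z,X)-Zg_{\mathcal F}(X,Y)-g_{\mathcal F}(Y,[X,Z]^{\mathcal F})-g_{\mathcal F}(Z,[Y,X]^{\mathcal F})+g_{\mathcal F}(X,[Z,Y]^{\mathcal F})$ and $2g_{\mathcal F}(\nabla^{\mathcal F,0}_UY,Z)=Ug_{\mathcal F}(Y,Z)-g_{\mathcal F}(Y,[U,Z]^{\mathcal F})-g_{\mathcal F}(Z,[Y,U]^{\mathcal F})$; $R^{\mathcal F,0}$ is its curvature.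 $\widetilde\Omega_{\mathcal F}(X,Y):=[Y,X]^{\mathcal T}$ for $X,Y\in\Gamma(\mathcal F)$, and for $V\in\Gamma(TM)$, $(L_Vg_{\mathcal F})(X,Y):=Vg_{\mathcal F}(X,Y)-g_{\mathcal F}([V,X]^{\mathcal F},Y)-g_{\mathcal F}(X,[V,Y]^{\mathcal F})$. *)

theory Defs
  imports Main "HOL.Real_Vector_Spaces"
begin

text \<open>
Algebraic model of the geometric setting.
  'f  : the ring C^\<infinity>(M) of smooth real functions (a commutative real algebra);
  'v  : the C^\<infinity>(M)-module \<Gamma>(TM) of vector fields;
  sm  : multiplication of a vector field by a function;
  act : V f = derivative of the function f along the vector field V;
  br  : Lie bracket of vector fields;
  PF  : projection TM = F (+) T onto F (so X^F = PF X, X^T = X - PF X);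
  g   : the fiber metric g_F (only evaluated on sections of F);
  nab : the connection nabla^{F,0}, nab V Y = nabla_V Y for Y in \<Gamma>(F).
\<close>

definition secF :: "('v \<Rightarrow> 'v) \<Rightarrow> 'v set" where
  "secF PF = {X. PF X = X}"

definition secT :: "('v::zero \<Rightarrow> 'v) \<Rightarrow> 'v set" where
  "secT PF = {U. PF U = 0}"

definition vector_fields ::
  "('f::{comm_ring_1,real_algebra_1} \<Rightarrow> 'v::ab_group_add \<Rightarrow> 'v) \<Rightarrow>
   ('v \<Rightarrow> 'f \<Rightarrow> 'f) \<Rightarrow> ('v \<Rightarrow> 'v \<Rightarrow> 'v) \<Rightarrow> bool" where
  "vector_fields sm act br \<longleftrightarrow>
     module sm \<and>
     (\<forall>V f h. act V (f + h) = act V f + act V h) \<and>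
     (\<forall>V f h. act V (f * h) = f * act V h + h * act V f) \<and>
     (\<forall>V r. act V (of_real r) = 0) \<and>
     (\<forall>V W f. act (V + W) f = act V f + act W f) \<and>
     (\<forall>V h f. act (sm h V) f = h * act V f) \<and>
     (\<forall>X Y Z. br (X + Y) Z = br X Z + br Y Z) \<and>
     (\<forall>X Y. br X Y = - br Y X) \<and>
     (\<forall>X Y Z. br X (br Y Z) + br Y (br Z X) + br Z (br X Y) = 0) \<and>
     (\<forall>X Y f. br X (sm f Y) = sm f (br X Y) + sm (act X f) Y) \<and>
     (\<forall>X Y f. act (br X Y) f = act X (act Y f) - act Y (act X f))"

definition splitting :: "('f::comm_ring_1 \<Rightarrow> 'v::ab_group_add \<Rightarrow> 'v) \<Rightarrow> ('v \<Rightarrow> 'v) \<Rightarrow> bool" where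
  "splitting sm PF \<longleftrightarrow>
     (\<forall>X Y. PF (X + Y) = PF X + PF Y) \<and>
     (\<forall>f X. PF (sm f X) = sm f (PF X)) \<and>
     (\<forall>X. PF (PF X) = PF X)"

definition fiber_metric ::
  "('f::comm_ring_1 \<Rightarrow> 'v::ab_group_add \<Rightarrow> 'v) \<Rightarrow> ('v \<Rightarrow> 'v) \<Rightarrow> ('v \<Rightarrow> 'v \<Rightarrow> 'f) \<Rightarrow> bool" where
  "fiber_metric sm PF g \<longleftrightarrow>
     (\<forall>X\<in>secF PF. \<forall>Y\<in>secF PF. g X Y = g Y X) \<and>
     (\<forall>X\<in>secF PF. \<forall>Y\<in>secF PF. \<forall>Z\<in>secF PF. g (X + Y) Z = g X Z + g Y Z) \<and>
     (\<forall>f. \<forall>X\<in>secF PF. \<forall>Y\<in>secF PF. g (sm f X) Y = f * g X Y) \<and>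
     (\<forall>X\<in>secF PF. (\<forall>W\<in>secF PF. g X W = 0) \<longrightarrow> X = 0)"

definition connection_on_F ::
  "('f::comm_ring_1 \<Rightarrow> 'v::ab_group_add \<Rightarrow> 'v) \<Rightarrow> ('v \<Rightarrow> 'f \<Rightarrow> 'f) \<Rightarrow> ('v \<Rightarrow> 'v) \<Rightarrow>
   ('v \<Rightarrow> 'v \<Rightarrow> 'v) \<Rightarrow> bool" where
  "connection_on_F sm act PF nab \<longleftrightarrow>
     (\<forall>V. \<forall>Y\<in>secF PF. nab V Y \<in> secF PF) \<and>
     (\<forall>V W. \<forall>Y\<in>secF PF. nab (V + W) Y = nab V Y + nab W Y) \<and>
     (\<forall>f V. \<forall>Y\<in>secF PF. nab (sm f V) Y = sm f (nab V Y)) \<and>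
     (\<forall>V. \<forall>Y\<in>secF PF. \<forall>Z\<in>secF PF. nab V (Y + Z) = nab V Y + nab V Z) \<and>
     (\<forall>f V. \<forall>Y\<in>secF PF. nab V (sm f Y) = sm f (nab V Y) + sm (act V f) Y)"

definition curv :: "('v::ab_group_add \<Rightarrow> 'v \<Rightarrow> 'v) \<Rightarrow> ('v \<Rightarrow> 'v \<Rightarrow> 'v) \<Rightarrow> 'v \<Rightarrow> 'v \<Rightarrow> 'v \<Rightarrow> 'v" where
  "curv br nab X Y Z = nab X (nab Y Z) - nab Y (nab X Z) - nab (br X Y) Z"

definition OmegaF :: "('v::ab_group_add \<Rightarrow> 'v \<Rightarrow> 'v) \<Rightarrow> ('v \<Rightarrow> 'v) \<Rightarrow> 'v \<Rightarrow> 'v \<Rightarrow> 'v" where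
  "OmegaF br PF X Y = br Y X - PF (br Y X)"

definition LieF :: "('v \<Rightarrow> 'f::ab_group_add \<Rightarrow> 'f) \<Rightarrow> ('v \<Rightarrow> 'v \<Rightarrow> 'v) \<Rightarrow> ('v \<Rightarrow> 'v) \<Rightarrow>
     ('v \<Rightarrow> 'v \<Rightarrow> 'f) \<Rightarrow> 'v \<Rightarrow> 'v \<Rightarrow> 'v \<Rightarrow> 'f" where
  "LieF act br PF g V X Y = act V (g X Y) - g (PF (br V X)) Y - g X (PF (br V Y))"

end

theory Submission
  imports Defs
begin

text \<open>Koszul's formula along \<open>F\<close> makes \<open>\<nabla>\<close> torsion free on sections of \<open>F\<close>:
\<open>\<nabla>\<^sub>X Y - \<nabla>\<^sub>Y X = [X,Y]\<^sup>F\<close>. Writing \<open>[Y,Z] = [Y,Z]\<^sup>F - \<Omega>(Y,Z)\<close>, the Jacobi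
identity then reduces the cyclic sum of curvatures to the cyclic sum of
\<open>[X,\<Omega>(Y,Z)]\<^sup>F + \<nabla>\<^bsub>\<Omega>(Y,Z)\<^esub> X\<close>, and Koszul's formula along \<open>T\<close> shows that twice the
pairing of such a term with \<open>W\<close> is \<open>(L\<^bsub>\<Omega>(Y,Z)\<^esub> g)(X,W)\<close>.\<close>

lemma two_mult_half_scaleR: "2 * ((1/2) *\<^sub>R a) = (a :: 'a :: real_algebra_1)"
proof -
  have "2 * ((1/2) *\<^sub>R a) = (2 * (1/2::real)) *\<^sub>R a"
    by (metis mult_scaleR_right scaleR_scaleR scaleR_conv_of_real of_real_numeral)
  then show ?thesis by simp
qed

lemma two_mult_cancel: "2 * a = 2 * b \<Longrightarrow> a = (b :: 'a :: real_algebra_1)"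
  by (metis two_mult_half_scaleR mult_scaleR_right)

locale split_connection =
  fixes sm :: "'f::{comm_ring_1,real_algebra_1} \<Rightarrow> 'v::ab_group_add \<Rightarrow> 'v"
    and act :: "'v \<Rightarrow> 'f \<Rightarrow> 'f"
    and br :: "'v \<Rightarrow> 'v \<Rightarrow> 'v"
    and PF :: "'v \<Rightarrow> 'v"
    and g :: "'v \<Rightarrow> 'v \<Rightarrow> 'f"
    and nab :: "'v \<Rightarrow> 'v \<Rightarrow> 'v"
  assumes vector_fields: "vector_fields sm act br"
    and splitting: "splitting sm PF"
    and fiber_metric: "fiber_metric sm PF g"
    and connection: "connection_on_F sm act PF nab"
begin

lemma PF_add: "PF (X + Y) = PF X + PF Y"
  and PF_idem: "PF (PF X) = PF X"
  using splitting unfolding splitting_def by blast+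

sublocale PF: additive PF
  by unfold_locales (rule PF_add)

lemma PF_in_secF [simp]: "PF X \<in> secF PF"
  by (simp add: secF_def PF_idem)

lemma zero_in_secF [simp]: "0 \<in> secF PF"
  by (simp add: secF_def PF.zero)

lemma secF_minus [simp]: "X \<in> secF PF \<Longrightarrow> - X \<in> secF PF"
  by (simp add: secF_def PF.minus)

lemma secF_add [simp]: "X \<in> secF PF \<Longrightarrow> Y \<in> secF PF \<Longrightarrow> X + Y \<in> secF PF"
  by (simp add: secF_def PF_add)

lemma secF_diff [simp]: "X \<in> secF PF \<Longrightarrow> Y \<in> secF PF \<Longrightarrow> X - Y \<in> secF PF"
  by (simp add: secF_def PF.diff)

lemma OmegaF_in_secT: "OmegaF br PF X Y \<in> secT PF"
  by (simp add: secT_def OmegaF_def PF.diff PF_idem)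

lemma br_add_left: "br (X + Y) Z = br X Z + br Y Z"
  and br_antisym: "br X Y = - br Y X"
  and br_jacobi: "br X (br Y Z) + br Y (br Z X) + br Z (br X Y) = 0"
  using vector_fields unfolding vector_fields_def by blast+

lemma additive_br_right: "additive (br X)"
proof
  fix Y Z
  show "br X (Y + Z) = br X Y + br X Z"
    by (simp only: br_antisym[of X] br_add_left minus_add_distrib)
qed

lemma PF_br_eq_br_plus_OmegaF: "PF (br X Y) = br X Y + OmegaF br PF X Y"
  by (simp add: OmegaF_def br_antisym[of Y X] PF.minus)

lemma g_sym: "X \<in> secF PF \<Longrightarrow> Y \<in> secF PF \<Longrightarrow> g X Y = g Y X"
  and g_add_left: "X \<in> secF PF \<Longrightarrow> Y \<in> secF PF \<Longrightarrow> Z \<in> secF PF \<Longrightarrow> g (X + Y) Z = g X Z + g Y Z"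
  and g_nondegenerate: "X \<in> secF PF \<Longrightarrow> (\<And>W. W \<in> secF PF \<Longrightarrow> g X W = 0) \<Longrightarrow> X = 0"
  using fiber_metric unfolding fiber_metric_def by blast+

lemma g_diff_left: "X \<in> secF PF \<Longrightarrow> Y \<in> secF PF \<Longrightarrow> Z \<in> secF PF \<Longrightarrow> g (X - Y) Z = g X Z - g Y Z"
  using g_add_left[of "X - Y" Y Z] by (simp add: eq_diff_eq)

lemma g_zero_left: "Z \<in> secF PF \<Longrightarrow> g 0 Z = 0"
  using g_diff_left[of Z Z Z] by simp

lemma g_minus_left: "X \<in> secF PF \<Longrightarrow> Z \<in> secF PF \<Longrightarrow> g (- X) Z = - g X Z"
  using g_diff_left[of 0 X Z] by (simp add: g_zero_left)

lemma g_minus_right: "X \<in> secF PF \<Longrightarrow> Y \<in> secF PF \<Longrightarrow> g X (- Y) = - g X Y"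
  by (simp add: g_sym[of X "- Y"] g_sym[of X Y] g_minus_left)

lemma nab_in_secF [simp]: "Y \<in> secF PF \<Longrightarrow> nab V Y \<in> secF PF"
  and nab_add_left: "Y \<in> secF PF \<Longrightarrow> nab (V + W) Y = nab V Y + nab W Y"
  and nab_add_right: "Y \<in> secF PF \<Longrightarrow> Z \<in> secF PF \<Longrightarrow> nab V (Y + Z) = nab V Y + nab V Z"
  using connection unfolding connection_on_F_def by blast+

lemma nab_diff_right: "Y \<in> secF PF \<Longrightarrow> Z \<in> secF PF \<Longrightarrow> nab V (Y - Z) = nab V Y - nab V Z"
  using nab_add_right[of "Y - Z" Z V] by (simp add: eq_diff_eq)

end

locale koszul_F_connection = split_connection +
  assumes koszul_F: "\<And>X Y Z. X \<in> secF PF \<Longrightarrow> Y \<in> secF PF \<Longrightarrow> Z \<in> secF PF \<Longrightarrow>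
       2 * g (nab X Y) Z = act X (g Y Z) + act Y (g Z X) - act Z (g X Y)
         - g Y (PF (br X Z)) - g Z (PF (br Y X)) + g X (PF (br Z Y))"
begin

lemma nab_torsion_free:
  assumes A: "A \<in> secF PF" and B: "B \<in> secF PF"
  shows "nab A B - nab B A = PF (br A B)"
proof -
  have "g (nab A B - nab B A - PF (br A B)) W = 0" if W: "W \<in> secF PF" for W
  proof (rule two_mult_cancel)
    have g_swap: "g W A = g A W" "g W B = g B W" "g B A = g A B" "g W (PF (br A B)) = g (PF (br A B)) W"
      using A B W g_sym by simp_all
    have br_swap: "g B (PF (br W A)) = - g B (PF (br A W))" "g A (PF (br W B)) = - g A (PF (br B W))"
        "g W (PF (br B A)) = - g (PF (br A B)) W"
      using A B W
      by (simp_all add: br_antisym[of W A] br_antisym[of W B] br_antisym[of B A] PF.minus g_minus_right g_swap(4))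
    have "2 * g (nab A B - nab B A - PF (br A B)) W
        = 2 * g (nab A B) W - 2 * g (nab B A) W - 2 * g (PF (br A B)) W"
      using A B W by (simp add: g_diff_left right_diff_distrib)
    also have "\<dots> = 2 * 0"
      unfolding koszul_F[OF A B W] koszul_F[OF B A W] g_swap br_swap
      by (simp add: algebra_simps)
    finally show "2 * g (nab A B - nab B A - PF (br A B)) W = 2 * 0" .
  qed
  then show ?thesis
    using A B g_nondegenerate[of "nab A B - nab B A - PF (br A B)"] by simp
qed

lemma curv_cyclic_term:
  assumes X: "X \<in> secF PF" and Y: "Y \<in> secF PF" and Z: "Z \<in> secF PF"
  shows "nab X (nab Y Z - nab Z Y) - nab (br Y Z) X
    = PF (br X (br Y Z)) + (PF (br X (OmegaF br PF Y Z)) + nab (OmegaF br PF Y Z) X)"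
proof -
  define \<Omega> where "\<Omega> = OmegaF br PF Y Z"
  have split: "PF (br Y Z) = br Y Z + \<Omega>"
    unfolding \<Omega>_def by (rule PF_br_eq_br_plus_OmegaF)
  have "nab (br Y Z) X = nab (PF (br Y Z)) X - nab \<Omega> X"
    using nab_add_left[OF X, of "br Y Z" \<Omega>] unfolding split by simp
  moreover have "nab X (PF (br Y Z)) - nab (PF (br Y Z)) X = PF (br X (br Y Z)) + PF (br X \<Omega>)"
    using nab_torsion_free[OF X PF_in_secF, of "br Y Z"]
    unfolding split additive.add[OF additive_br_right] PF_add .
  ultimately show ?thesis
    using nab_torsion_free[OF Y Z] unfolding \<Omega>_def[symmetric] by (simp add: algebra_simps)
qed

lemma curv_cyclic_sum:
  assumes X: "X \<in> secF PF" and Y: "Y \<in> secF PF" and Z: "Z \<in> secF PF"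
  shows "curv br nab X Y Z + curv br nab Z X Y + curv br nab Y Z X
    = (PF (br X (OmegaF br PF Y Z)) + nab (OmegaF br PF Y Z) X)
    + (PF (br Y (OmegaF br PF Z X)) + nab (OmegaF br PF Z X) Y)
    + (PF (br Z (OmegaF br PF X Y)) + nab (OmegaF br PF X Y) Z)"
proof -
  have "curv br nab X Y Z + curv br nab Z X Y + curv br nab Y Z X
      = (nab X (nab Y Z - nab Z Y) - nab (br Y Z) X) + (nab Y (nab Z X - nab X Z) - nab (br Z X) Y)
      + (nab Z (nab X Y - nab Y X) - nab (br X Y) Z)"
    using X Y Z by (simp add: curv_def nab_diff_right algebra_simps)
  also have "\<dots> = PF (br X (br Y Z) + br Y (br Z X) + br Z (br X Y))
      + (PF (br X (OmegaF br PF Y Z)) + nab (OmegaF br PF Y Z) X)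
      + (PF (br Y (OmegaF br PF Z X)) + nab (OmegaF br PF Z X) Y)
      + (PF (br Z (OmegaF br PF X Y)) + nab (OmegaF br PF X Y) Z)"
    using X Y Z by (simp add: curv_cyclic_term PF_add algebra_simps)
  finally show ?thesis
    by (simp add: br_jacobi PF.zero)
qed

end

locale koszul_T_connection = split_connection +
  assumes koszul_T: "\<And>U Y Z. U \<in> secT PF \<Longrightarrow> Y \<in> secF PF \<Longrightarrow> Z \<in> secF PF \<Longrightarrow>
       2 * g (nab U Y) Z = act U (g Y Z) - g Y (PF (br U Z)) - g Z (PF (br Y U))"
begin

lemma LieF_eq_g_PF_br_plus_nab:
  assumes U: "U \<in> secT PF" and A: "A \<in> secF PF" and W: "W \<in> secF PF"
  shows "LieF act br PF g U A W = 2 * g (PF (br A U) + nab U A) W"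
proof -
  have "2 * g (PF (br A U) + nab U A) W = 2 * g (PF (br A U)) W + 2 * g (nab U A) W"
    using A W by (simp add: g_add_left distrib_left)
  also have "\<dots> = act U (g A W) - g (PF (br U A)) W - g A (PF (br U W))"
    using A W by (simp add: koszul_T[OF U A W] br_antisym[of A U] PF.minus
        g_minus_left g_minus_right g_sym[of W "PF (br U A)"] algebra_simps)
  finally show ?thesis by (simp add: LieF_def)
qed

end

theorem mainTheorem5:
  fixes sm :: "'f::{comm_ring_1,real_algebra_1} \<Rightarrow> 'v::ab_group_add \<Rightarrow> 'v"
    and act :: "'v \<Rightarrow> 'f \<Rightarrow> 'f"
    and br :: "'v \<Rightarrow> 'v \<Rightarrow> 'v"
    and PF :: "'v \<Rightarrow> 'v"
    and g :: "'v \<Rightarrow> 'v \<Rightarrow> 'f"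
    and nab :: "'v \<Rightarrow> 'v \<Rightarrow> 'v"
  assumes vf: "vector_fields sm act br"
    and spl: "splitting sm PF"
    and met: "fiber_metric sm PF g"
    and conn: "connection_on_F sm act PF nab"
    and koszulF: "\<And>X Y Z. X \<in> secF PF \<Longrightarrow> Y \<in> secF PF \<Longrightarrow> Z \<in> secF PF \<Longrightarrow>
       2 * g (nab X Y) Z = act X (g Y Z) + act Y (g Z X) - act Z (g X Y)
         - g Y (PF (br X Z)) - g Z (PF (br Y X)) + g X (PF (br Z Y))"
    and koszulT: "\<And>U Y Z. U \<in> secT PF \<Longrightarrow> Y \<in> secF PF \<Longrightarrow> Z \<in> secF PF \<Longrightarrow>
       2 * g (nab U Y) Z = act U (g Y Z) - g Y (PF (br U Z)) - g Z (PF (br Y U))"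
    and XF: "X \<in> secF PF" and YF: "Y \<in> secF PF" and ZF: "Z \<in> secF PF" and WF: "W \<in> secF PF"
  shows "g (curv br nab X Y Z + curv br nab Z X Y + curv br nab Y Z X) W =
    (1/2) *\<^sub>R (LieF act br PF g (OmegaF br PF Y Z) X W
              + LieF act br PF g (OmegaF br PF X Y) Z W
              + LieF act br PF g (OmegaF br PF Z X) Y W)"
proof -
  interpret koszul_F_connection sm act br PF g nab
    using vf spl met conn koszulF by unfold_locales
  interpret koszul_T_connection sm act br PF g nab
    using koszulT by unfold_locales
  have "2 * g (curv br nab X Y Z + curv br nab Z X Y + curv br nab Y Z X) W
      = 2 * g (PF (br X (OmegaF br PF Y Z)) + nab (OmegaF br PF Y Z) X) W
      + 2 * g (PF (br Y (OmegaF br PF Z X)) + nab (OmegaF br PF Z X) Y) W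
      + 2 * g (PF (br Z (OmegaF br PF X Y)) + nab (OmegaF br PF X Y) Z) W"
    using XF YF ZF WF by (simp add: curv_cyclic_sum g_add_left distrib_left)
  also have "\<dots> = LieF act br PF g (OmegaF br PF Y Z) X W
      + LieF act br PF g (OmegaF br PF Z X) Y W
      + LieF act br PF g (OmegaF br PF X Y) Z W"
    by (simp only: LieF_eq_g_PF_br_plus_nab[OF OmegaF_in_secT XF WF]
        LieF_eq_g_PF_br_plus_nab[OF OmegaF_in_secT YF WF]
        LieF_eq_g_PF_br_plus_nab[OF OmegaF_in_secT ZF WF])
  also have "\<dots> = 2 * ((1/2) *\<^sub>R (LieF act br PF g (OmegaF br PF Y Z) X W
              + LieF act br PF g (OmegaF br PF X Y) Z W
              + LieF act br PF g (OmegaF br PF Z X) Y W))"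
    by (simp only: two_mult_half_scaleR add_ac)
  finally show ?thesis
    by (rule two_mult_cancel)
qed

end
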